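(* Let $k\ge2$, $n\ge1$, and let $T$ be a $k$-tensor in $n$ dimensions with all entries positive that is $2$-line stochastic. Then $T$ has a unique positive fixed point, i.e., there is exactly one entrywise positive probability vector $p\in\mathbb R^n$ with $T(p,\dots,p)=p$.
   Context: A $k$-tensor in $n$ dimensions is an array $T=(T_{i,j_1,\dots,j_{k-1}})$ with all indices in $[n]$; the first index is the output index. It acts on probability vectors by $T(p_1,\dots,p_{k-1})_i=\sum_{j_1,\dots,j_{k-1}=1}^n T_{i,j_1,\dots,j_{k-1}}\,p_1(j_1)\cdots p_{k-1}(j_{k-1})$. $T$ is $2$-line stochastic if it is stochastic over the output index, i.e., $\sum_{i=1}^nT_{i,j_1,\dots,j_{k-1}}=1$ for all fixed $j_1,\dots,j_{k-1}$, and there is an input position $m\in\{1,\dots,k-1\}$ over which it is also stochastic, i.e., $\sum_{j_m=1}^nT_{i,j_1,\dots,j_{k-1}}=1$ for every fixing of $i$ and of the other input indices. A fixed point of $T$ is a probability vector $p$ (nonnegative entries summing to $1$) with $p=T(p,\dots,p)$. *)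

theory Defs
  imports Complex_Main
begin

text \<open>A k-tensor in n dimensions is represented as T :: nat \<Rightarrow> nat list \<Rightarrow> real,
  where T i js is the entry with output index i \<in> {0..<n} and input indices
  js = [j_1,...,j_(k-1)] (a list of length k-1 with entries in {0..<n}).
  Indices are 0-based. Values outside this range are irrelevant.\<close>

definition input_indices :: "nat \<Rightarrow> nat \<Rightarrow> nat list set" where
  "input_indices k n = {js. length js = k - 1 \<and> set js \<subseteq> {..<n}}"

definition tensor_apply_diag :: "nat \<Rightarrow> nat \<Rightarrow> (nat \<Rightarrow> nat list \<Rightarrow> real) \<Rightarrow> (nat \<Rightarrow> real) \<Rightarrow> nat \<Rightarrow> real" where
  "tensor_apply_diag k n T p i =
     (\<Sum>js\<in>input_indices k n. T i js * (\<Prod>l<k - 1. p (js ! l)))"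

definition positive_tensor :: "nat \<Rightarrow> nat \<Rightarrow> (nat \<Rightarrow> nat list \<Rightarrow> real) \<Rightarrow> bool" where
  "positive_tensor k n T \<longleftrightarrow> (\<forall>i<n. \<forall>js\<in>input_indices k n. T i js > 0)"

definition two_line_stochastic :: "nat \<Rightarrow> nat \<Rightarrow> (nat \<Rightarrow> nat list \<Rightarrow> real) \<Rightarrow> bool" where
  "two_line_stochastic k n T \<longleftrightarrow>
     (\<forall>js\<in>input_indices k n. (\<Sum>i<n. T i js) = 1) \<and>
     (\<exists>m<k - 1. \<forall>i<n. \<forall>js\<in>input_indices k n. (\<Sum>j<n. T i (js[m := j])) = 1)"

definition prob_vector :: "nat \<Rightarrow> (nat \<Rightarrow> real) \<Rightarrow> bool" where
  "prob_vector n p \<longleftrightarrow> (\<forall>i<n. p i \<ge> 0) \<and> (\<forall>i\<ge>n. p i = 0) \<and> (\<Sum>i<n. p i) = 1"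

definition is_fixed_point :: "nat \<Rightarrow> nat \<Rightarrow> (nat \<Rightarrow> nat list \<Rightarrow> real) \<Rightarrow> (nat \<Rightarrow> real) \<Rightarrow> bool" where
  "is_fixed_point k n T p \<longleftrightarrow> prob_vector n p \<and> (\<forall>i<n. tensor_apply_diag k n T p i = p i)"

end

theory Submission
  imports Defs
begin

text \<open>Let m be an input position in which T is stochastic. Grouping the input indices into
  lines in direction m, T(p,\<dots>,p) = W(p) p for the matrix W(p) obtained by freezing every
  input except the m-th at p. Its rows sum to the total weight of the lines, which is 1 whenever
  p is a fixed point (here the stochasticity over the output index enters), and its entries are
  positive when T and p are. So a positive fixed point is, at its largest coordinate, a strict
  convex combination of all its coordinates and hence constant; the uniform vector is indeed
  a fixed point.\<close>

lemma update_in_input_indices: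
  "js \<in> input_indices k n \<Longrightarrow> j < n \<Longrightarrow> js[m := j] \<in> input_indices k n"
  unfolding input_indices_def using set_update_subset_insert[of js m j] by auto

lemma nth_input_indices_less:
  assumes "js \<in> input_indices k n" and "l < k - 1"
  shows "js ! l < n"
proof -
  have "js ! l \<in> set js"
    using assms by (simp add: input_indices_def)
  then show ?thesis
    using assms(1) by (auto simp: input_indices_def)
qed

lemma finite_input_indices: "finite (input_indices k n)"
  unfolding input_indices_def using finite_lists_length_eq[of "{..<n}" "k - 1"]
  by (simp add: conj_commute)

lemma card_input_indices: "card (input_indices k n) = n ^ (k - 1)"
  unfolding input_indices_def using card_lists_length_eq[of "{..<n}" "k - 1"]
  by (simp add: conj_commute)

definition line_representatives :: "nat \<Rightarrow> nat \<Rightarrow> nat \<Rightarrow> nat list set" where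
  "line_representatives k n m = {r \<in> input_indices k n. r ! m = 0}"

lemma sum_input_indices_by_lines:
  fixes F :: "nat list \<Rightarrow> 'a::comm_monoid_add"
  assumes "m < k - 1"
  shows "(\<Sum>js\<in>input_indices k n. F js)
       = (\<Sum>r\<in>line_representatives k n m. \<Sum>j<n. F (r[m := j]))"
proof -
  let ?R = "line_representatives k n m" and ?I = "input_indices k n"
  have "bij_betw (\<lambda>(r, j). r[m := j]) (?R \<times> {..<n}) ?I"
  proof (rule bij_betw_byWitness[where f' = "\<lambda>js. (js[m := 0], js ! m)"])
    show "\<forall>a\<in>?R \<times> {..<n}. (\<lambda>js. (js[m := 0], js ! m)) ((\<lambda>(r, j). r[m := j]) a) = a"
      using assms by (auto simp: line_representatives_def input_indices_def) (metis list_update_id)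
    show "\<forall>js\<in>?I. (\<lambda>(r, j). r[m := j]) (js[m := 0], js ! m) = js"
      by simp
    show "(\<lambda>(r, j). r[m := j]) ` (?R \<times> {..<n}) \<subseteq> ?I"
      by (auto simp: line_representatives_def intro: update_in_input_indices)
    show "(\<lambda>js. (js[m := 0], js ! m)) ` ?I \<subseteq> ?R \<times> {..<n}"
    proof (rule image_subsetI)
      fix js assume js: "js \<in> ?I"
      then have "js ! m < n" using assms by (rule nth_input_indices_less)
      moreover have "js[m := 0] \<in> ?I"
        using js \<open>js ! m < n\<close> by (intro update_in_input_indices) auto
      ultimately show "(js[m := 0], js ! m) \<in> ?R \<times> {..<n}"
        using js assms by (simp add: line_representatives_def input_indices_def)
    qed
  qed
  then have "(\<Sum>x\<in>?R \<times> {..<n}. F ((\<lambda>(r, j). r[m := j]) x)) = (\<Sum>js\<in>?I. F js)"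
    by (rule sum.reindex_bij_betw)
  then show ?thesis
    by (simp add: sum.cartesian_product split_def)
qed

definition diag_monomial :: "nat \<Rightarrow> (nat \<Rightarrow> real) \<Rightarrow> nat list \<Rightarrow> real" where
  "diag_monomial k p js = (\<Prod>l<k - 1. p (js ! l))"

definition line_weight :: "nat \<Rightarrow> nat \<Rightarrow> (nat \<Rightarrow> real) \<Rightarrow> nat list \<Rightarrow> real" where
  "line_weight k m p r = (\<Prod>l\<in>{..<k - 1} - {m}. p (r ! l))"

lemma diag_monomial_update:
  assumes "m < k - 1" and "length r = k - 1"
  shows "diag_monomial k p (r[m := j]) = p j * line_weight k m p r"
proof -
  have "diag_monomial k p (r[m := j])
      = p (r[m := j] ! m) * (\<Prod>l\<in>{..<k - 1} - {m}. p (r[m := j] ! l))"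
    unfolding diag_monomial_def using assms(1) by (simp add: prod.remove)
  also have "(\<Prod>l\<in>{..<k - 1} - {m}. p (r[m := j] ! l)) = line_weight k m p r"
    unfolding line_weight_def by (auto intro!: prod.cong)
  finally show ?thesis using assms by simp
qed

lemma sum_diag_monomials_by_lines:
  assumes "m < k - 1"
  shows "(\<Sum>js\<in>input_indices k n. diag_monomial k p js)
       = (\<Sum>j<n. p j) * (\<Sum>r\<in>line_representatives k n m. line_weight k m p r)"
proof -
  have len: "length r = k - 1" if "r \<in> line_representatives k n m" for r
    using that by (simp add: line_representatives_def input_indices_def)
  show ?thesis
    by (simp add: sum_input_indices_by_lines[OF assms] diag_monomial_update[OF assms len]
        sum_distrib_left sum_distrib_right sum.swap[of _ "{..<n}"])
qed

definition line_matrix ::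
    "nat \<Rightarrow> nat \<Rightarrow> nat \<Rightarrow> (nat \<Rightarrow> nat list \<Rightarrow> real) \<Rightarrow> (nat \<Rightarrow> real) \<Rightarrow> nat \<Rightarrow> nat \<Rightarrow> real" where
  "line_matrix k n m T p i j =
     (\<Sum>r\<in>line_representatives k n m. T i (r[m := j]) * line_weight k m p r)"

lemma tensor_apply_diag_line_matrix:
  assumes "m < k - 1"
  shows "tensor_apply_diag k n T p i = (\<Sum>j<n. line_matrix k n m T p i j * p j)"
proof -
  have len: "length r = k - 1" if "r \<in> line_representatives k n m" for r
    using that by (simp add: line_representatives_def input_indices_def)
  have "tensor_apply_diag k n T p i = (\<Sum>js\<in>input_indices k n. T i js * diag_monomial k p js)"
    by (simp add: tensor_apply_diag_def diag_monomial_def)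
  also have "\<dots> = (\<Sum>r\<in>line_representatives k n m. \<Sum>j<n.
                     T i (r[m := j]) * (p j * line_weight k m p r))"
    by (simp add: sum_input_indices_by_lines[OF assms] diag_monomial_update[OF assms len])
  also have "\<dots> = (\<Sum>j<n. line_matrix k n m T p i j * p j)"
    by (subst sum.swap) (simp add: line_matrix_def sum_distrib_left sum_distrib_right ac_simps)
  finally show ?thesis .
qed

lemma sum_line_matrix:
  assumes "\<forall>js\<in>input_indices k n. (\<Sum>j<n. T i (js[m := j])) = 1"
  shows "(\<Sum>j<n. line_matrix k n m T p i j) = (\<Sum>r\<in>line_representatives k n m. line_weight k m p r)"
proof -
  have "(\<Sum>j<n. line_matrix k n m T p i j)
      = (\<Sum>r\<in>line_representatives k n m. (\<Sum>j<n. T i (r[m := j])) * line_weight k m p r)"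
    unfolding line_matrix_def by (subst sum.swap) (simp add: sum_distrib_right)
  also have "\<dots> = (\<Sum>r\<in>line_representatives k n m. line_weight k m p r)"
    using assms by (auto simp: line_representatives_def intro!: sum.cong)
  finally show ?thesis .
qed

lemma line_matrix_pos:
  assumes "m < k - 1" and "0 < n" and "positive_tensor k n T" and "\<forall>l<n. p l > 0"
    and "i < n" and "j < n"
  shows "line_matrix k n m T p i j > 0"
  unfolding line_matrix_def
proof (rule sum_pos)
  show "finite (line_representatives k n m)"
    unfolding line_representatives_def using finite_input_indices by simp
  have "replicate (k - 1) 0 \<in> line_representatives k n m"
    using assms(1,2) by (simp add: line_representatives_def input_indices_def)
  then show "line_representatives k n m \<noteq> {}" by blast
  fix r assume r: "r \<in> line_representatives k n m"
  then have "r \<in> input_indices k n" by (simp add: line_representatives_def)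
  then have "line_weight k m p r > 0"
    unfolding line_weight_def using assms(4) by (auto intro!: prod_pos dest: nth_input_indices_less)
  moreover have "T i (r[m := j]) > 0"
    using assms(3,5,6) \<open>r \<in> input_indices k n\<close>
    by (simp add: positive_tensor_def update_in_input_indices)
  ultimately show "T i (r[m := j]) * line_weight k m p r > 0" by simp
qed

lemma sum_diag_monomials_fixed_point:
  assumes "\<forall>js\<in>input_indices k n. (\<Sum>i<n. T i js) = 1" and "is_fixed_point k n T p"
  shows "(\<Sum>js\<in>input_indices k n. diag_monomial k p js) = 1"
proof -
  have "(\<Sum>js\<in>input_indices k n. diag_monomial k p js)
      = (\<Sum>js\<in>input_indices k n. (\<Sum>i<n. T i js) * diag_monomial k p js)"
    using assms(1) by simp
  also have "\<dots> = (\<Sum>i<n. tensor_apply_diag k n T p i)"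
    by (simp add: tensor_apply_diag_def diag_monomial_def sum_distrib_right sum.swap[of _ "{..<n}"])
  also have "\<dots> = (\<Sum>i<n. p i)"
    using assms(2) by (simp add: is_fixed_point_def)
  also have "\<dots> = 1"
    using assms(2) by (simp add: is_fixed_point_def prob_vector_def)
  finally show ?thesis .
qed

lemma convex_combination_eq_upper_bound:
  fixes w x :: "'a \<Rightarrow> real"
  assumes "finite A" and "\<forall>a\<in>A. w a > 0" and "sum w A = 1"
    and "\<forall>a\<in>A. x a \<le> c" and "(\<Sum>a\<in>A. w a * x a) = c"
  shows "\<forall>a\<in>A. x a = c"
proof -
  have "(\<Sum>a\<in>A. w a * (c - x a)) = c * sum w A - (\<Sum>a\<in>A. w a * x a)"
    by (simp add: algebra_simps sum_subtractf sum_distrib_left)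
  also have "\<dots> = 0" using assms(3,5) by simp
  finally have "\<forall>a\<in>A. w a * (c - x a) = 0"
    using assms(1,2,4) by (subst sum_nonneg_eq_0_iff[symmetric]) auto
  then show ?thesis using assms(2) by force
qed

definition uniform_vector :: "nat \<Rightarrow> nat \<Rightarrow> real" where
  "uniform_vector n i = (if i < n then 1 / real n else 0)"

lemma prob_vector_uniform_vector: "0 < n \<Longrightarrow> prob_vector n (uniform_vector n)"
  by (simp add: prob_vector_def uniform_vector_def)

lemma uniform_vector_fixed_point:
  assumes "m < k - 1" and "0 < n"
    and line_stochastic: "\<forall>i<n. \<forall>js\<in>input_indices k n. (\<Sum>j<n. T i (js[m := j])) = 1"
  shows "is_fixed_point k n T (uniform_vector n)"
proof -
  let ?u = "uniform_vector n"
  have "diag_monomial k ?u js = (1 / real n) ^ (k - 1)" if "js \<in> input_indices k n" for js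
    unfolding diag_monomial_def uniform_vector_def
    using nth_input_indices_less[OF that] by simp
  then have "(\<Sum>js\<in>input_indices k n. diag_monomial k ?u js) = 1"
    using assms(2) by (simp add: card_input_indices power_one_over)
  then have weights: "(\<Sum>r\<in>line_representatives k n m. line_weight k m ?u r) = 1"
    using sum_diag_monomials_by_lines[OF assms(1), where p = ?u] prob_vector_uniform_vector[OF assms(2)]
    by (simp add: prob_vector_def)
  have "tensor_apply_diag k n T ?u i = ?u i" if "i < n" for i
  proof -
    have "tensor_apply_diag k n T ?u i = (\<Sum>j<n. line_matrix k n m T ?u i j) / real n"
      by (simp add: tensor_apply_diag_line_matrix[OF assms(1)] uniform_vector_def sum_divide_distrib)
    also have "\<dots> = ?u i"
      using sum_line_matrix[where p = ?u] line_stochastic weights that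
      by (simp add: uniform_vector_def)
    finally show ?thesis .
  qed
  then show ?thesis
    using prob_vector_uniform_vector[OF assms(2)] by (simp add: is_fixed_point_def)
qed

lemma positive_fixed_point_eq_uniform_vector:
  assumes "m < k - 1" and "0 < n" and "positive_tensor k n T"
    and stochastic: "\<forall>js\<in>input_indices k n. (\<Sum>i<n. T i js) = 1"
    and line_stochastic: "\<forall>i<n. \<forall>js\<in>input_indices k n. (\<Sum>j<n. T i (js[m := j])) = 1"
    and fixed: "is_fixed_point k n T p" and pos: "\<forall>i<n. p i > 0"
  shows "p = uniform_vector n"
proof -
  define M where "M = Max (p ` {..<n})"
  have le_M: "\<forall>j\<in>{..<n}. p j \<le> M"
    by (simp add: M_def)
  obtain i where i: "i < n" "p i = M"
    using Max_in[of "p ` {..<n}"] assms(2) unfolding M_def by fastforce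
  have weights: "(\<Sum>r\<in>line_representatives k n m. line_weight k m p r) = 1"
    using sum_diag_monomials_by_lines[OF assms(1), where p = p]
      sum_diag_monomials_fixed_point[OF stochastic fixed] fixed
    by (simp add: is_fixed_point_def prob_vector_def)
  have "\<forall>j\<in>{..<n}. p j = M"
  proof (rule convex_combination_eq_upper_bound)
    show "\<forall>j\<in>{..<n}. line_matrix k n m T p i j > 0"
      using line_matrix_pos[OF assms(1-3) pos i(1)] by simp
    show "(\<Sum>j<n. line_matrix k n m T p i j) = 1"
      using sum_line_matrix[where p = p] line_stochastic i(1) weights by simp
    show "(\<Sum>j<n. line_matrix k n m T p i j * p j) = M"
      using fixed i by (simp add: is_fixed_point_def tensor_apply_diag_line_matrix[OF assms(1), symmetric])
  qed (use le_M in simp_all)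
  moreover have "(\<Sum>j<n. p j) = 1"
    using fixed by (simp add: is_fixed_point_def prob_vector_def)
  ultimately have "M = 1 / real n"
    using assms(2) by (simp add: field_simps)
  with \<open>\<forall>j\<in>{..<n}. p j = M\<close> fixed show ?thesis
    by (auto simp: fun_eq_iff uniform_vector_def is_fixed_point_def prob_vector_def)
qed

theorem theorem1p6:
  fixes k n :: nat and T :: "nat \<Rightarrow> nat list \<Rightarrow> real"
  assumes "k \<ge> 2" and "n \<ge> 1"
    and "positive_tensor k n T"
    and "two_line_stochastic k n T"
  shows "\<exists>!p. is_fixed_point k n T p \<and> (\<forall>i<n. p i > 0)"
proof -
  have "0 < n" using assms(2) by simp
  obtain m where "m < k - 1"
    and line_stochastic: "\<forall>i<n. \<forall>js\<in>input_indices k n. (\<Sum>j<n. T i (js[m := j])) = 1"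
    using assms(4) unfolding two_line_stochastic_def by blast
  have stochastic: "\<forall>js\<in>input_indices k n. (\<Sum>i<n. T i js) = 1"
    using assms(4) unfolding two_line_stochastic_def by blast
  show ?thesis
  proof (rule ex1I)
    show "is_fixed_point k n T (uniform_vector n) \<and> (\<forall>i<n. uniform_vector n i > 0)"
      using uniform_vector_fixed_point[OF \<open>m < k - 1\<close> \<open>0 < n\<close> line_stochastic]
      by (simp add: uniform_vector_def)
    show "p = uniform_vector n" if "is_fixed_point k n T p \<and> (\<forall>i<n. p i > 0)" for p
      using positive_fixed_point_eq_uniform_vector[OF \<open>m < k - 1\<close> \<open>0 < n\<close> assms(3)
          stochastic line_stochastic] that by blast
  qed
qed

end
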